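(* For $d\ge2$, $V^{(1)}_{d-1}=\{v\in V_{d-1}:\alpha_{d-1}(v)=\mathrm{id}\}$ and $V^{(2)}_{d-1}=\{v\in V_{d-1}:\alpha_{0X^{d-2}}(v)=\alpha_{1X^{d-2}}(v)=\mathrm{id}\}$.
   Context: Let $X=\{0,1\}$, $G(d)$ the automorphism group of the finite binary rooted tree of words of length $\le d$; finite sections $g(wv)=g(w)g_w(v)$. $C_2=\{\mathrm{id},\sigma\}$ written additively; $\alpha(g)=\sigma$ if $g(0)=1$ and $\mathrm{id}$ otherwise; $\alpha_{(w)}(g)=\alpha(g_w)$; for finite $S$, $\alpha_S(g)=\sum_{w\in S}\alpha_{(w)}(g)$; $\alpha_k=\alpha_{X^k}$ with $X^k$ the words of length $k$; $xX^k=\{xw:w\in X^k\}$. $V_{d-1}=G(d)_{d-1}$ is the level-$(d-1)$ stabilizer of $G(d)$; $V^{(0)}_{d-1}=V_{d-1}$ and $V^{(i+1)}_{d-1}=[G(d),V^{(i)}_{d-1}]$. *)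

theory Defs
  imports "HOL-Algebra.Generated_Groups" "HOL-Library.Z2"
begin

text \<open>Vertices of the binary rooted tree: words over X = {0,1}, encoded as bool lists
  (False = 0, True = 1). The finite tree of depth d consists of the words of length at most d.\<close>

definition words_le :: "nat \<Rightarrow> bool list set" where
  "words_le d = {w. length w \<le> d}"

definition Xpow :: "nat \<Rightarrow> bool list set" where
  "Xpow k = {w. length w = k}"

definition prefixed :: "bool \<Rightarrow> nat \<Rightarrow> bool list set" where
  "prefixed x k = (\<lambda>w. x # w) ` Xpow k"

text \<open>Automorphisms of the tree of depth d: bijections of the vertex set preserving
  the length of words and the prefix relation (i.e. the tree structure); extended by the
  identity outside the tree so that equality of automorphisms is equality of functions.\<close>
definition is_tree_aut :: "nat \<Rightarrow> (bool list \<Rightarrow> bool list) \<Rightarrow> bool" where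
  "is_tree_aut d g \<longleftrightarrow>
     bij_betw g (words_le d) (words_le d)
   \<and> (\<forall>w \<in> words_le d. length (g w) = length w)
   \<and> (\<forall>u v. u @ v \<in> words_le d \<longrightarrow> (\<exists>x. g (u @ v) = g u @ x))
   \<and> (\<forall>w. w \<notin> words_le d \<longrightarrow> g w = w)"

definition Gd :: "nat \<Rightarrow> (bool list \<Rightarrow> bool list) monoid" where
  "Gd d = \<lparr> carrier = {g. is_tree_aut d g}, mult = (\<lambda>g h. g \<circ> h), one = id \<rparr>"

text \<open>Section g_w, determined by g(wv) = g(w) g_w(v).\<close>
definition tree_section :: "(bool list \<Rightarrow> bool list) \<Rightarrow> bool list \<Rightarrow> bool list \<Rightarrow> bool list" where
  "tree_section g w v = drop (length w) (g (w @ v))"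

text \<open>C_2 = {id, sigma} written additively is rendered as the type bit (Z/2):
  id = 0, sigma = 1.\<close>
definition alpha :: "(bool list \<Rightarrow> bool list) \<Rightarrow> bit" where
  "alpha g = (if g [False] = [True] then 1 else 0)"

definition alpha_at :: "bool list \<Rightarrow> (bool list \<Rightarrow> bool list) \<Rightarrow> bit" where
  "alpha_at w g = alpha (tree_section g w)"

definition alpha_S :: "bool list set \<Rightarrow> (bool list \<Rightarrow> bool list) \<Rightarrow> bit" where
  "alpha_S S g = (\<Sum>w\<in>S. alpha_at w g)"

definition level_stab :: "nat \<Rightarrow> nat \<Rightarrow> (bool list \<Rightarrow> bool list) set" where
  "level_stab d n = {g \<in> carrier (Gd d). \<forall>w. length w = n \<longrightarrow> g w = w}"

definition comm_sub :: "nat \<Rightarrow> (bool list \<Rightarrow> bool list) set \<Rightarrow> (bool list \<Rightarrow> bool list) set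
    \<Rightarrow> (bool list \<Rightarrow> bool list) set" where
  "comm_sub d A B = generate (Gd d)
     {g \<otimes>\<^bsub>Gd d\<^esub> h \<otimes>\<^bsub>Gd d\<^esub> inv\<^bsub>Gd d\<^esub> g \<otimes>\<^bsub>Gd d\<^esub> inv\<^bsub>Gd d\<^esub> h | g h. g \<in> A \<and> h \<in> B}"

text \<open>V^{(0)}_{d-1} = V_{d-1}, V^{(i+1)}_{d-1} = [G(d), V^{(i)}_{d-1}].\<close>
fun Vser :: "nat \<Rightarrow> nat \<Rightarrow> (bool list \<Rightarrow> bool list) set" where
  "Vser d 0 = level_stab d (d - 1)"
| "Vser d (Suc i) = comm_sub d (carrier (Gd d)) (Vser d i)"

end

theory Submission
  imports Defs
begin

text \<open>
  Write \<open>\<sigma>\<^sub>S\<close> (\<open>S \<subseteq> X\<^sup>d\<^sup>-\<^sup>1\<close>) for the element of \<open>V\<^sub>d\<^sub>-\<^sub>1\<close> with section \<open>\<sigma>\<close> exactly at the vertices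
  of \<open>S\<close>. Every element of \<open>V\<^sub>d\<^sub>-\<^sub>1\<close> is such a \<open>\<sigma>\<^sub>S\<close>, \<open>\<sigma>\<^sub>S \<sigma>\<^sub>T = \<sigma>\<^sub>S\<^sub>\<triangle>\<^sub>T\<close> and \<open>g \<sigma>\<^sub>S g\<^sup>-\<^sup>1 = \<sigma>\<^sub>g\<^sub>S\<close>, so
  \<open>[g, \<sigma>\<^sub>S] = \<sigma>\<^sub>g\<^sub>S\<^sub>\<triangle>\<^sub>S\<close>, and \<open>\<alpha>\<^sub>A(\<sigma>\<^sub>S) = |A \<inter> S| mod 2\<close>.

  Since \<open>|gS| = |S|\<close>, every commutator \<open>[g, \<sigma>\<^sub>S]\<close> has even support. Conversely \<open>G(d)\<close> acts transitively
  on \<open>X\<^sup>d\<^sup>-\<^sup>1\<close>, so \<open>\<sigma>\<^sub>{\<^sub>a\<^sub>,\<^sub>b\<^sub>} = [g, \<sigma>\<^sub>{\<^sub>a\<^sub>}]\<close> for some \<open>g\<close>, and even sets are disjoint unions of pairs.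

  For \<open>V\<^sup>(\<^sup>2\<^sup>)\<close>, \<open>g\<close> permutes the halves \<open>0X\<^sup>d\<^sup>-\<^sup>2\<close>, \<open>1X\<^sup>d\<^sup>-\<^sup>2\<close>, and an even \<open>T\<close> meets both halves with
  the same parity, so \<open>gT \<triangle> T\<close> is even in each half. Conversely, a pair \<open>{a, b}\<close> inside one half is
  \<open>[g, \<sigma>\<^sub>{\<^sub>a\<^sub>,\<^sub>u\<^sub>}]\<close> where \<open>u\<close> lies in the other half and \<open>g\<close> maps \<open>a\<close> to \<open>b\<close> and fixes \<open>u\<close>.
\<close>

section \<open>Tree automorphisms\<close>

lemma tree_autD:
  assumes "is_tree_aut d g"
  shows tree_aut_bij: "bij_betw g (words_le d) (words_le d)"
    and tree_aut_length: "w \<in> words_le d \<Longrightarrow> length (g w) = length w"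
    and tree_aut_prefix: "u @ v \<in> words_le d \<Longrightarrow> \<exists>x. g (u @ v) = g u @ x"
    and tree_aut_outside: "w \<notin> words_le d \<Longrightarrow> g w = w"
  using assms unfolding is_tree_aut_def by blast+

lemma words_le_appendD: "u @ v \<in> words_le d \<Longrightarrow> u \<in> words_le d"
  by (auto simp: words_le_def)

lemma tree_aut_comp:
  assumes g: "is_tree_aut d g" and h: "is_tree_aut d h"
  shows "is_tree_aut d (g \<circ> h)"
proof -
  have hw: "h w \<in> words_le d" if "w \<in> words_le d" for w
    using that tree_aut_bij[OF h] by (auto simp: bij_betw_def)
  have "\<exists>x. g (h (u @ v)) = g (h u) @ x" if uv: "u @ v \<in> words_le d" for u v
  proof -
    obtain x where x: "h (u @ v) = h u @ x" using tree_aut_prefix[OF h uv] by blast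
    then obtain y where "g (h u @ x) = g (h u) @ y" using tree_aut_prefix[OF g] hw[OF uv] by metis
    then show ?thesis using x by auto
  qed
  then show ?thesis
    using bij_betw_trans[OF tree_aut_bij[OF h] tree_aut_bij[OF g]] hw
      tree_aut_length[OF g] tree_aut_length[OF h] tree_aut_outside[OF g] tree_aut_outside[OF h]
    unfolding is_tree_aut_def by simp
qed

definition tree_aut_inv :: "nat \<Rightarrow> (bool list \<Rightarrow> bool list) \<Rightarrow> bool list \<Rightarrow> bool list" where
  "tree_aut_inv d g w = (if w \<in> words_le d then inv_into (words_le d) g w else w)"

lemma tree_aut_inv_comp:
  assumes "is_tree_aut d g"
  shows "tree_aut_inv d g \<circ> g = id"
proof
  fix w
  have inj: "inj_on g (words_le d)" and onto: "g ` words_le d = words_le d"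
    using tree_aut_bij[OF assms] by (auto simp: bij_betw_def)
  show "(tree_aut_inv d g \<circ> g) w = id w"
  proof (cases "w \<in> words_le d")
    case True
    then show ?thesis using inv_into_f_f[OF inj True] onto by (auto simp: tree_aut_inv_def)
  next
    case False
    then show ?thesis using tree_aut_outside[OF assms] by (simp add: tree_aut_inv_def)
  qed
qed

lemma tree_aut_tree_aut_inv:
  assumes g: "is_tree_aut d g"
  shows "is_tree_aut d (tree_aut_inv d g)"
proof -
  let ?g' = "tree_aut_inv d g"
  have bij: "bij_betw g (words_le d) (words_le d)" by (rule tree_aut_bij[OF g])
  have inv: "g (?g' w) = w" "?g' w \<in> words_le d" if "w \<in> words_le d" for w
    using that bij f_inv_into_f[of w g] inv_into_into[of w g]
    by (auto simp: tree_aut_inv_def bij_betw_def)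
  have bij': "bij_betw ?g' (words_le d) (words_le d)"
    using bij_betw_inv_into[OF bij] by (rule bij_betw_cong[THEN iffD1, rotated]) (simp add: tree_aut_inv_def)
  have len: "length (?g' w) = length w" if "w \<in> words_le d" for w
    using tree_aut_length[OF g] inv[OF that] by metis
  have "\<exists>x. ?g' (u @ v) = ?g' u @ x" if uv: "u @ v \<in> words_le d" for u v
  proof -
    define p q where "p = take (length u) (?g' (u @ v))" and "q = drop (length u) (?g' (u @ v))"
    have pq: "?g' (u @ v) = p @ q" unfolding p_def q_def by simp
    have p: "p \<in> words_le d" using inv(2)[OF uv] pq words_le_appendD by metis
    obtain y where "g (p @ q) = g p @ y" using tree_aut_prefix[OF g] inv(2)[OF uv] pq by metis
    moreover have "length (g p) = length u"
      using tree_aut_length[OF g p] len[OF uv] unfolding p_def by simp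
    ultimately have "g p = u" using inv(1)[OF uv] pq by (metis append_eq_append_conv)
    then have "?g' u = p"
      using inv_into_f_f[OF _ p] bij words_le_appendD[OF uv]
      by (auto simp: tree_aut_inv_def bij_betw_def)
    then show ?thesis using pq by blast
  qed
  then show ?thesis
    using bij' len unfolding is_tree_aut_def by (simp add: tree_aut_inv_def)
qed

lemma Gd_mult: "x \<otimes>\<^bsub>Gd d\<^esub> y = x \<circ> y"
  by (simp add: Gd_def)

lemma Gd_one: "\<one>\<^bsub>Gd d\<^esub> = id"
  by (simp add: Gd_def)

lemma group_Gd: "group (Gd d)"
proof (rule groupI)
  fix x assume "x \<in> carrier (Gd d)"
  then show "\<exists>y\<in>carrier (Gd d). y \<otimes>\<^bsub>Gd d\<^esub> x = \<one>\<^bsub>Gd d\<^esub>"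
    using tree_aut_inv_comp[of d x] tree_aut_tree_aut_inv[of d x] by (auto simp: Gd_def)
qed (auto simp: Gd_def tree_aut_comp comp_assoc is_tree_aut_def[of _ id])

lemma tree_aut_snoc:
  assumes "is_tree_aut d g" "length w < d"
  obtains c where "g (w @ [b]) = g w @ [c]"
proof -
  have wb: "w @ [b] \<in> words_le d" using assms(2) by (simp add: words_le_def)
  obtain x where x: "g (w @ [b]) = g w @ x" using tree_aut_prefix[OF assms(1) wb] by blast
  have "length (g (w @ [b])) = Suc (length (g w))"
    using tree_aut_length[OF assms(1)] wb words_le_appendD[OF wb] by simp
  then obtain c where "x = [c]" using x by (cases x) auto
  then show thesis using x that by blast
qed

lemma tree_aut_snoc_Not:
  assumes g: "is_tree_aut d g" and "length w < d" and c: "g (w @ [b]) = g w @ [c]"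
  shows "g (w @ [\<not> b]) = g w @ [\<not> c]"
proof -
  obtain c' where c': "g (w @ [\<not> b]) = g w @ [c']" using tree_aut_snoc[OF assms(1,2)] by blast
  have "w @ [b] \<in> words_le d" "w @ [\<not> b] \<in> words_le d" using assms(2) by (auto simp: words_le_def)
  then have "g (w @ [\<not> b]) \<noteq> g (w @ [b])"
    using tree_aut_bij[OF g] by (auto simp: bij_betw_def dest: inj_onD)
  then show ?thesis using c c' by (cases c; cases c') auto
qed

lemma level_stab_fixes_shorter:
  assumes v: "v \<in> level_stab d n" and "n \<le> d" "length x \<le> n"
  shows "v x = x"
proof -
  have a: "is_tree_aut d v" using v by (simp add: level_stab_def Gd_def)
  define r where "r = replicate (n - length x) False"
  have xr: "length (x @ r) = n" "x @ r \<in> words_le d"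
    using assms(2,3) by (simp_all add: r_def words_le_def)
  obtain y where "v (x @ r) = v x @ y" using tree_aut_prefix[OF a xr(2)] by blast
  moreover have "v (x @ r) = x @ r" using v xr(1) by (simp add: level_stab_def)
  moreover have "length (v x) = length x" using tree_aut_length[OF a words_le_appendD[OF xr(2)]] .
  ultimately show ?thesis by (metis append_eq_append_conv)
qed

lemma finite_Xpow: "finite (Xpow k)"
  using finite_lists_length_eq[of "UNIV :: bool set" k] by (simp add: Xpow_def)

lemma Gd_image_Xpow:
  assumes "g \<in> carrier (Gd d)" "k \<le> d" "T \<subseteq> Xpow k"
  shows "g ` T \<subseteq> Xpow k" "card (g ` T) = card T"
proof -
  have a: "is_tree_aut d g" using assms(1) by (simp add: Gd_def)
  have T: "T \<subseteq> words_le d" using assms(2,3) by (auto simp: Xpow_def words_le_def)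
  then show "g ` T \<subseteq> Xpow k" using assms(3) tree_aut_length[OF a] by (auto simp: Xpow_def)
  show "card (g ` T) = card T"
    using tree_aut_bij[OF a] T by (auto simp: bij_betw_def intro: card_image inj_on_subset)
qed

lemma Xpow_Suc_eq_prefixed: "Xpow (Suc k) = prefixed False k \<union> prefixed True k"
proof
  show "Xpow (Suc k) \<subseteq> prefixed False k \<union> prefixed True k"
  proof
    fix w assume "w \<in> Xpow (Suc k)"
    then obtain x v where "w = x # v" "v \<in> Xpow k" by (cases w) (auto simp: Xpow_def)
    then show "w \<in> prefixed False k \<union> prefixed True k" by (cases x) (auto simp: prefixed_def)
  qed
qed (auto simp: prefixed_def Xpow_def)

lemma disjnt_prefixed: "x \<noteq> y \<Longrightarrow> disjnt (prefixed x k) (prefixed y k)"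
  by (auto simp: prefixed_def disjnt_def)

lemma Gd_permutes_subtrees:
  assumes g: "g \<in> carrier (Gd d)" and "k < d"
  obtains s where "\<And>x. s (\<not> x) = (\<not> s x)" "\<And>x. g ` prefixed x k \<subseteq> prefixed (s x) k"
proof
  have a: "is_tree_aut d g" using g by (simp add: Gd_def)
  have "g [] = []" using tree_aut_length[OF a, of "[]"] by (simp add: words_le_def)
  then have g1: "g [x] = [hd (g [x])]" for x
    using tree_aut_snoc[OF a, of "[]" x] assms(2) by fastforce
  show "hd (g [\<not> x]) = (\<not> hd (g [x]))" for x
    using tree_aut_snoc_Not[OF a, of "[]" x "hd (g [x])"] g1[of x] assms(2) \<open>g [] = []\<close> by simp
  show "g ` prefixed x k \<subseteq> prefixed (hd (g [x])) k" for x
  proof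
    fix z assume "z \<in> g ` prefixed x k"
    then obtain v where z: "z = g ([x] @ v)" and v: "length v = k"
      by (auto simp: prefixed_def Xpow_def)
    have xv: "[x] @ v \<in> words_le d" using v assms(2) by (simp add: words_le_def)
    obtain y where "z = hd (g [x]) # y" using tree_aut_prefix[OF a xv] g1[of x] z by (metis append_Cons append_Nil)
    moreover have "length z = Suc k" using tree_aut_length[OF a xv] z v by simp
    ultimately show "z \<in> prefixed (hd (g [x])) k" by (auto simp: prefixed_def Xpow_def)
  qed
qed

section \<open>Transitivity on levels\<close>

definition xor_word :: "bool list \<Rightarrow> bool list \<Rightarrow> bool list" where
  "xor_word c w = map (\<lambda>i. w ! i \<noteq> (i < length c \<and> c ! i)) [0..<length w]"

lemma length_xor_word[simp]: "length (xor_word c w) = length w"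
  by (simp add: xor_word_def)

lemma xor_word_Nil[simp]: "xor_word c [] = []"
  by (simp add: xor_word_def)

lemma nth_xor_word: "i < length w \<Longrightarrow> xor_word c w ! i = (w ! i \<noteq> (i < length c \<and> c ! i))"
  by (simp add: xor_word_def)

lemma xor_word_xor_word[simp]: "xor_word c (xor_word c w) = w"
  by (rule nth_equalityI) (auto simp: nth_xor_word)

lemma xor_word_swap: "length a = length b \<Longrightarrow> xor_word (xor_word b a) a = b"
  by (rule nth_equalityI) (auto simp: nth_xor_word)

lemma hd_xor_word:
  assumes "w \<noteq> []"
  shows "hd (xor_word c w) = (hd w \<noteq> (c \<noteq> [] \<and> hd c))"
proof -
  have "xor_word c w \<noteq> []" using assms by (metis length_xor_word length_0_conv)
  then have "hd (xor_word c w) = xor_word c w ! 0" by (rule hd_conv_nth)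
  then show ?thesis using assms by (cases c) (simp_all add: nth_xor_word hd_conv_nth)
qed

lemma take_xor_word: "take (length u) (xor_word c (u @ v)) = xor_word c u"
  by (rule nth_equalityI) (auto simp: nth_xor_word nth_append)

text \<open>Translation by \<open>c\<close> inside the subtrees whose first letter lies in \<open>T\<close>; it is an automorphism
  as long as these subtrees are not moved out of \<open>T\<close>.\<close>

definition xor_aut :: "nat \<Rightarrow> bool set \<Rightarrow> bool list \<Rightarrow> bool list \<Rightarrow> bool list" where
  "xor_aut d T c w = (if length w \<le> d \<and> (w = [] \<or> hd w \<in> T) then xor_word c w else w)"

lemma xor_aut_xor_aut:
  assumes "T = UNIV \<or> c = [] \<or> \<not> hd c"
  shows "xor_aut d T c (xor_aut d T c w) = w"
proof (cases "length w \<le> d \<and> (w = [] \<or> hd w \<in> T)")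
  case True
  moreover have "xor_word c w = [] \<or> hd (xor_word c w) \<in> T"
    using True assms by (cases "w = []") (auto simp: hd_xor_word)
  ultimately show ?thesis by (simp add: xor_aut_def)
qed (auto simp: xor_aut_def)

lemma xor_aut_in_carrier:
  assumes "T = UNIV \<or> c = [] \<or> \<not> hd c"
  shows "xor_aut d T c \<in> carrier (Gd d)"
proof -
  have len: "length (xor_aut d T c w) = length w" for w by (simp add: xor_aut_def)
  have bij: "bij_betw (xor_aut d T c) (words_le d) (words_le d)"
    by (rule bij_betw_byWitness[where f' = "xor_aut d T c"])
      (auto simp: xor_aut_xor_aut[OF assms] len words_le_def)
  have "\<exists>x. xor_aut d T c (u @ v) = xor_aut d T c u @ x" if uv: "u @ v \<in> words_le d" for u v
  proof (cases "u \<noteq> [] \<and> hd u \<in> T")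
    case True
    then have "xor_aut d T c (u @ v) = xor_word c (u @ v)" "xor_aut d T c u = xor_word c u"
      using uv by (auto simp: xor_aut_def words_le_def)
    then show ?thesis using take_xor_word[of u c v] by (metis append_take_drop_id)
  next
    case False
    then show ?thesis by (cases "u = []") (auto simp: xor_aut_def)
  qed
  then show ?thesis
    using bij len by (auto simp: Gd_def is_tree_aut_def xor_aut_def words_le_def)
qed

lemma Gd_transitive_on_Xpow:
  assumes "a \<in> Xpow k" "b \<in> Xpow k" "k \<le> d"
  obtains g where "g \<in> carrier (Gd d)" "g a = b"
proof
  show "xor_aut d UNIV (xor_word b a) \<in> carrier (Gd d)" by (simp add: xor_aut_in_carrier)
  show "xor_aut d UNIV (xor_word b a) a = b"
    using assms by (simp add: xor_aut_def Xpow_def xor_word_swap)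
qed

lemma Gd_transitive_on_prefixed_fixing:
  assumes "a \<in> prefixed y k" "b \<in> prefixed y k" "u \<in> prefixed (\<not> y) k" "k < d"
  obtains g where "g \<in> carrier (Gd d)" "g a = b" "g u = u"
proof
  let ?c = "xor_word b a"
  have "\<not> hd ?c" using assms(1,2) by (auto simp: prefixed_def hd_xor_word)
  then show "xor_aut d {y} ?c \<in> carrier (Gd d)" by (simp add: xor_aut_in_carrier)
  show "xor_aut d {y} ?c a = b" "xor_aut d {y} ?c u = u"
    using assms by (auto simp: xor_aut_def prefixed_def Xpow_def xor_word_swap)
qed

section \<open>The level stabilizer\<close>

text \<open>\<open>level_flip d S\<close> is the element \<open>\<sigma>\<^sub>S\<close> above.\<close>

definition level_flip :: "nat \<Rightarrow> bool list set \<Rightarrow> bool list \<Rightarrow> bool list" where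
  "level_flip d S w = (if length w = d \<and> butlast w \<in> S then butlast w @ [\<not> last w] else w)"

definition level_flips :: "nat \<Rightarrow> (bool list set \<Rightarrow> bool) \<Rightarrow> (bool list \<Rightarrow> bool list) set" where
  "level_flips d P = {level_flip d S | S. S \<subseteq> Xpow (d - 1) \<and> P S}"

lemma level_flip_empty: "level_flip d {} = id"
  by (auto simp: level_flip_def)

lemma level_flip_comp:
  assumes "d \<ge> 1"
  shows "level_flip d S \<circ> level_flip d T = level_flip d (sym_diff S T)"
proof
  fix w
  show "(level_flip d S \<circ> level_flip d T) w = level_flip d (sym_diff S T) w"
  proof (cases "length w = d")
    case True
    with assms obtain u b where "w = u @ [b]" by (cases w rule: rev_cases) auto
    with True show ?thesis by (auto simp: level_flip_def)
  qed (auto simp: level_flip_def)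
qed

lemma level_flip_length: "d \<ge> 1 \<Longrightarrow> length (level_flip d S w) = length w"
  by (auto simp: level_flip_def)

lemma level_flip_in_level_stab:
  assumes "d \<ge> 1"
  shows "level_flip d S \<in> level_stab d (d - 1)"
proof -
  have invol: "level_flip d S (level_flip d S w) = w" for w
    using level_flip_comp[OF assms, of S S] by (metis Diff_cancel Un_absorb comp_apply id_apply level_flip_empty)
  have bij: "bij_betw (level_flip d S) (words_le d) (words_le d)"
    by (rule bij_betw_byWitness[where f' = "level_flip d S"])
      (auto simp: invol level_flip_length[OF assms] words_le_def)
  have "\<exists>x. level_flip d S (u @ v) = level_flip d S u @ x" if "u @ v \<in> words_le d" for u v
  proof (cases "v = []")
    case False
    with that have "length u \<noteq> d" by (auto simp: words_le_def)
    with False show ?thesis by (auto simp: level_flip_def butlast_append)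
  qed simp
  then have "is_tree_aut d (level_flip d S)"
    using bij level_flip_length[OF assms] by (auto simp: is_tree_aut_def level_flip_def words_le_def)
  then show ?thesis using assms by (auto simp: level_stab_def Gd_def level_flip_def)
qed

lemma level_flip_in_carrier: "d \<ge> 1 \<Longrightarrow> level_flip d S \<in> carrier (Gd d)"
  using level_flip_in_level_stab by (auto simp: level_stab_def)

lemma level_stab_eq_level_flips:
  assumes d: "d \<ge> 1"
  shows "level_stab d (d - 1) = level_flips d (\<lambda>_. True)"
proof
  show "level_flips d (\<lambda>_. True) \<subseteq> level_stab d (d - 1)"
    using level_flip_in_level_stab[OF d] by (auto simp: level_flips_def)
next
  show "level_stab d (d - 1) \<subseteq> level_flips d (\<lambda>_. True)"
  proof
    fix v assume v: "v \<in> level_stab d (d - 1)"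
    have a: "is_tree_aut d v" using v by (simp add: level_stab_def Gd_def)
    define S where "S = {w \<in> Xpow (d - 1). v (w @ [False]) = w @ [True]}"
    have "v x = level_flip d S x" for x
    proof (cases "length x = d")
      case True
      then obtain w b where x: "x = w @ [b]" and w: "length w = d - 1"
        using d by (cases x rule: rev_cases) auto
      have vw: "v w = w" using level_stab_fixes_shorter[OF v] w by simp
      obtain c where c: "v (w @ [False]) = w @ [c]"
        using tree_aut_snoc[OF a, of w False] w d vw by auto
      have "v (w @ [True]) = w @ [\<not> c]"
        using tree_aut_snoc_Not[OF a, of w False c] w d vw c by simp
      then show ?thesis using c w d by (cases b; cases c) (auto simp: x S_def Xpow_def level_flip_def)
    next
      case False
      then have "v x = x"
        using level_stab_fixes_shorter[OF v, of x] tree_aut_outside[OF a, of x]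
        by (cases "length x < d") (auto simp: words_le_def)
      then show ?thesis using False by (simp add: level_flip_def)
    qed
    then show "v \<in> level_flips d (\<lambda>_. True)" unfolding level_flips_def S_def by blast
  qed
qed

lemma tree_aut_comp_level_flip:
  assumes d: "d \<ge> 1" and g: "g \<in> carrier (Gd d)" and S: "S \<subseteq> Xpow (d - 1)"
  shows "g \<circ> level_flip d S = level_flip d (g ` S) \<circ> g"
proof
  have a: "is_tree_aut d g" using g by (simp add: Gd_def)
  fix x
  show "(g \<circ> level_flip d S) x = (level_flip d (g ` S) \<circ> g) x"
  proof (cases "length x = d")
    case True
    then obtain w b where x: "x = w @ [b]" and w: "length w = d - 1"
      using d by (cases x rule: rev_cases) auto
    have ww: "w \<in> words_le d" using w by (simp add: words_le_def)
    have lw: "length w < d" using w d by simp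
    obtain c where c: "g (w @ [b]) = g w @ [c]" using tree_aut_snoc[OF a lw] .
    have c': "g (w @ [\<not> b]) = g w @ [\<not> c]" using tree_aut_snoc_Not[OF a lw c] .
    have "inj_on g (words_le d)" using tree_aut_bij[OF a] by (simp add: bij_betw_def)
    moreover have "S \<subseteq> words_le d" using S by (auto simp: Xpow_def words_le_def)
    ultimately have "g w \<in> g ` S \<longleftrightarrow> w \<in> S" using ww by (auto dest: inj_onD)
    moreover have "length (g w) = d - 1" using tree_aut_length[OF a ww] w by simp
    ultimately show ?thesis using c c' d w by (simp add: x level_flip_def)
  next
    case False
    then show ?thesis
      using tree_aut_length[OF a, of x] tree_aut_outside[OF a, of x]
      by (cases "x \<in> words_le d") (auto simp: level_flip_def words_le_def)
  qed
qed

lemma inv_level_flip: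
  assumes "d \<ge> 1"
  shows "inv\<^bsub>Gd d\<^esub> (level_flip d S) = level_flip d S"
proof (rule group.inv_equality[OF group_Gd _ level_flip_in_carrier[OF assms] level_flip_in_carrier[OF assms]])
  show "level_flip d S \<otimes>\<^bsub>Gd d\<^esub> level_flip d S = \<one>\<^bsub>Gd d\<^esub>"
    using level_flip_comp[OF assms, of S S] by (simp add: Gd_mult Gd_one level_flip_empty)
qed

lemma commutator_level_flip:
  assumes d: "d \<ge> 1" and g: "g \<in> carrier (Gd d)" and S: "S \<subseteq> Xpow (d - 1)"
  shows "g \<otimes>\<^bsub>Gd d\<^esub> level_flip d S \<otimes>\<^bsub>Gd d\<^esub> inv\<^bsub>Gd d\<^esub> g \<otimes>\<^bsub>Gd d\<^esub> inv\<^bsub>Gd d\<^esub> level_flip d S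
       = level_flip d (sym_diff (g ` S) S)"
proof -
  have "g \<circ> inv\<^bsub>Gd d\<^esub> g = id" using group.r_inv[OF group_Gd g] by (simp add: Gd_mult Gd_one)
  then have "g \<circ> level_flip d S \<circ> inv\<^bsub>Gd d\<^esub> g = level_flip d (g ` S)"
    unfolding tree_aut_comp_level_flip[OF assms] by (simp add: comp_assoc)
  then show ?thesis
    by (simp add: Gd_mult inv_level_flip[OF d] level_flip_comp[OF d])
qed

lemma alpha_S_level_flip:
  assumes d: "d \<ge> 1" and A: "A \<subseteq> Xpow (d - 1)"
  shows "alpha_S A (level_flip d S) = of_nat (card (A \<inter> S))"
proof -
  have "finite A" using A finite_Xpow finite_subset by blast
  moreover have "alpha_at w (level_flip d S) = (if w \<in> S then 1 else 0)" if "w \<in> A" for w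
  proof -
    have "level_flip d S (w @ [False]) = w @ [w \<in> S]"
      using that A d by (auto simp: level_flip_def Xpow_def)
    then show ?thesis by (simp add: alpha_at_def alpha_def tree_section_def)
  qed
  ultimately show ?thesis
    by (simp add: alpha_S_def sum.If_cases Int_commute)
qed

section \<open>Evenly distributed sets\<close>

definition even_on :: "'a set set \<Rightarrow> 'a set \<Rightarrow> bool" where
  "even_on B S \<longleftrightarrow> (\<forall>A\<in>B. even (card (A \<inter> S)))"

lemma even_card_sym_diff:
  assumes "finite S" "finite T"
  shows "even (card (sym_diff S T)) \<longleftrightarrow> (even (card S) \<longleftrightarrow> even (card T))"
proof -
  have "card (S \<union> T) = card (sym_diff S T) + card (S \<inter> T)"
    using assms by (subst card_Un_disjoint[symmetric]) (auto intro: arg_cong[where f = card])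
  then have "card S + card T = card (sym_diff S T) + 2 * card (S \<inter> T)"
    using card_Un_Int[OF assms] by simp
  then show ?thesis by (metis even_add even_mult_iff even_numeral)
qed

lemma even_on_sym_diff:
  assumes "finite S" "finite T" "even_on B S" "even_on B T"
  shows "even_on B (sym_diff S T)"
proof -
  have "A \<inter> sym_diff S T = sym_diff (A \<inter> S) (A \<inter> T)" for A by blast
  then show ?thesis using assms even_card_sym_diff[of "_ \<inter> S" "_ \<inter> T"] by (simp add: even_on_def)
qed

lemma even_on_Diff_pair:
  assumes B: "pairwise disjnt B" "A \<in> B" and ab: "a \<in> A \<inter> S" "b \<in> A \<inter> S" "a \<noteq> b"
    and S: "finite S" "even_on B S"
  shows "even_on B (S - {a, b})"
  unfolding even_on_def
proof
  fix A' assume A': "A' \<in> B"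
  show "even (card (A' \<inter> (S - {a, b})))"
  proof (cases "A' = A")
    case True
    have "A' \<inter> (S - {a, b}) = (A \<inter> S) - {a, b}" "{a, b} \<subseteq> A \<inter> S" using True ab by auto
    then have "card (A' \<inter> (S - {a, b})) = card (A \<inter> S) - 2"
      using ab(3) by (simp add: card_Diff_subset)
    then show ?thesis using S(2) B(2) by (simp add: even_on_def)
  next
    case False
    then have "a \<notin> A'" "b \<notin> A'" using B A' ab by (auto simp: pairwise_def disjnt_def)
    then have "A' \<inter> (S - {a, b}) = A' \<inter> S" by auto
    then show ?thesis using S(2) A' by (simp add: even_on_def)
  qed
qed

lemma even_on_induct[consumes 4, case_names empty pair]:
  assumes "finite S" "S \<subseteq> \<Union>B" "pairwise disjnt B" "even_on B S"
    and empty: "P {}"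
    and pair: "\<And>A a b S. A \<in> B \<Longrightarrow> a \<in> A \<Longrightarrow> b \<in> A \<Longrightarrow> a \<noteq> b \<Longrightarrow> a \<notin> S \<Longrightarrow> b \<notin> S \<Longrightarrow> P S
      \<Longrightarrow> P (insert a (insert b S))"
  shows "P S"
  using assms(1,2,4)
proof (induction "card S" arbitrary: S rule: less_induct)
  case less
  show ?case
  proof (cases "S = {}")
    case False
    then obtain A a where A: "A \<in> B" "a \<in> A" "a \<in> S" using less.prems(2) by blast
    have "even (card (A \<inter> S))" using less.prems(3) A(1) by (simp add: even_on_def)
    then have "A \<inter> S \<noteq> {a}" by auto
    then obtain b where b: "b \<in> A" "b \<in> S" "b \<noteq> a" using A by blast
    define S' where "S' = S - {a, b}"
    have S: "S = insert a (insert b S')" using A b by (auto simp: S'_def)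
    have "even_on B S'"
      unfolding S'_def using assms(3) A b less.prems(1,3) by (intro even_on_Diff_pair) auto
    moreover have "card S' < card S" using less.prems(1) A(3) by (auto simp: S'_def intro: psubset_card_mono)
    ultimately have "P S'" using less by (auto simp: S'_def)
    then show ?thesis unfolding S using pair[OF A(1,2) b(1)] b(3) by (auto simp: S'_def)
  qed (simp add: empty)
qed

lemma bit_of_nat_eq_0_iff: "(of_nat n :: bit) = 0 \<longleftrightarrow> even n"
  by (induction n) auto

lemma level_stab_alpha_S_eq_level_flips:
  assumes d: "d \<ge> 1" and B: "\<Union>B \<subseteq> Xpow (d - 1)"
  shows "{v \<in> level_stab d (d - 1). \<forall>A\<in>B. alpha_S A v = 0} = level_flips d (even_on B)"
proof -
  have "alpha_S A (level_flip d S) = of_nat (card (A \<inter> S))" if "A \<in> B" for A S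
    using B that by (intro alpha_S_level_flip[OF d]) auto
  then have "(\<forall>A\<in>B. alpha_S A (level_flip d S) = 0) \<longleftrightarrow> even_on B S" for S
    by (simp add: bit_of_nat_eq_0_iff even_on_def)
  then show ?thesis
    unfolding level_stab_eq_level_flips[OF d] by (auto simp: level_flips_def)
qed

lemma subgroup_level_flips_even_on:
  assumes d: "d \<ge> 1"
  shows "subgroup (level_flips d (even_on B)) (Gd d)"
proof (rule group.subgroupI[OF group_Gd])
  show "level_flips d (even_on B) \<subseteq> carrier (Gd d)"
    using level_flip_in_carrier[OF d] by (auto simp: level_flips_def)
  have "level_flip d {} \<in> level_flips d (even_on B)"
    unfolding level_flips_def even_on_def by (intro CollectI exI[of _ "{}"]) simp
  then show "level_flips d (even_on B) \<noteq> {}" by blast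
next
  fix h assume "h \<in> level_flips d (even_on B)"
  then show "inv\<^bsub>Gd d\<^esub> h \<in> level_flips d (even_on B)"
    by (auto simp: level_flips_def inv_level_flip[OF d])
next
  fix h h' assume "h \<in> level_flips d (even_on B)" "h' \<in> level_flips d (even_on B)"
  then obtain S T where S: "h = level_flip d S" "S \<subseteq> Xpow (d - 1)" "even_on B S"
    and T: "h' = level_flip d T" "T \<subseteq> Xpow (d - 1)" "even_on B T"
    by (auto simp: level_flips_def)
  have "finite S" "finite T" using S(2) T(2) finite_Xpow finite_subset by blast+
  then have "even_on B (sym_diff S T)" using S(3) T(3) by (rule even_on_sym_diff)
  moreover have "h \<otimes>\<^bsub>Gd d\<^esub> h' = level_flip d (sym_diff S T)"
    using S(1) T(1) by (simp add: Gd_mult level_flip_comp[OF d])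
  moreover have "sym_diff S T \<subseteq> Xpow (d - 1)" using S(2) T(2) by blast
  ultimately show "h \<otimes>\<^bsub>Gd d\<^esub> h' \<in> level_flips d (even_on B)" unfolding level_flips_def by blast
qed

lemma commutator_in_comm_sub:
  "g \<in> A \<Longrightarrow> h \<in> N \<Longrightarrow> g \<otimes>\<^bsub>Gd d\<^esub> h \<otimes>\<^bsub>Gd d\<^esub> inv\<^bsub>Gd d\<^esub> g \<otimes>\<^bsub>Gd d\<^esub> inv\<^bsub>Gd d\<^esub> h \<in> comm_sub d A N"
  unfolding comm_sub_def by (rule generate.incl) blast

lemma subgroup_comm_sub:
  assumes "N \<subseteq> carrier (Gd d)"
  shows "subgroup (comm_sub d (carrier (Gd d)) N) (Gd d)"
proof -
  interpret group "Gd d" by (rule group_Gd)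
  show ?thesis unfolding comm_sub_def using assms by (intro generate_is_subgroup) auto
qed

lemma comm_sub_level_flips_subset:
  assumes d: "d \<ge> 1"
    and commutator: "\<And>g T. g \<in> carrier (Gd d) \<Longrightarrow> T \<subseteq> Xpow (d - 1) \<Longrightarrow> Q T
      \<Longrightarrow> even_on B (sym_diff (g ` T) T)"
  shows "comm_sub d (carrier (Gd d)) (level_flips d Q) \<subseteq> level_flips d (even_on B)"
proof -
  have "g \<otimes>\<^bsub>Gd d\<^esub> h \<otimes>\<^bsub>Gd d\<^esub> inv\<^bsub>Gd d\<^esub> g \<otimes>\<^bsub>Gd d\<^esub> inv\<^bsub>Gd d\<^esub> h \<in> level_flips d (even_on B)"
    if g: "g \<in> carrier (Gd d)" and h: "h \<in> level_flips d Q" for g h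
  proof -
    obtain T where T: "h = level_flip d T" "T \<subseteq> Xpow (d - 1)" "Q T"
      using h by (auto simp: level_flips_def)
    have "sym_diff (g ` T) T \<subseteq> Xpow (d - 1)" using Gd_image_Xpow(1)[OF g _ T(2)] T(2) by auto
    then show ?thesis
      using commutator_level_flip[OF d g T(2)] commutator[OF g T(2,3)] T(1)
      unfolding level_flips_def by blast
  qed
  then show ?thesis
    unfolding comm_sub_def
    by (intro group.generate_subgroup_incl[OF group_Gd _ subgroup_level_flips_even_on[OF d]]) blast
qed

lemma level_flips_even_on_subset:
  assumes d: "d \<ge> 1" and H: "subgroup H (Gd d)"
    and B: "\<Union>B = Xpow (d - 1)" "pairwise disjnt B"
    and pairs: "\<And>A a b. A \<in> B \<Longrightarrow> a \<in> A \<Longrightarrow> b \<in> A \<Longrightarrow> a \<noteq> b \<Longrightarrow> level_flip d {a, b} \<in> H"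
  shows "level_flips d (even_on B) \<subseteq> H"
proof
  fix h assume "h \<in> level_flips d (even_on B)"
  then obtain S where S: "h = level_flip d S" "S \<subseteq> Xpow (d - 1)" "even_on B S"
    by (auto simp: level_flips_def)
  have "finite S" using S(2) finite_Xpow finite_subset by blast
  moreover have "S \<subseteq> \<Union>B" using S(2) B(1) by simp
  ultimately have "level_flip d S \<in> H"
    using B(2) S(3)
  proof (induction rule: even_on_induct)
    case empty
    show ?case unfolding level_flip_empty Gd_one[of d, symmetric] by (rule subgroup.one_closed[OF H])
  next
    case (pair A a b S)
    then have "sym_diff {a, b} S = insert a (insert b S)" by auto
    then have "level_flip d (insert a (insert b S)) = level_flip d {a, b} \<otimes>\<^bsub>Gd d\<^esub> level_flip d S"
      by (simp add: Gd_mult level_flip_comp[OF d])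
    then show ?case using subgroup.m_closed[OF H pairs[OF pair(1-4)] pair(7)] by simp
  qed
  then show "h \<in> H" using S(1) by simp
qed

section \<open>The terms \<open>V\<^sup>(\<^sup>1\<^sup>)\<close> and \<open>V\<^sup>(\<^sup>2\<^sup>)\<close> of the series\<close>

lemma level_flip_pair_in_Vser_1:
  assumes d: "d \<ge> 1" and ab: "a \<in> Xpow (d - 1)" "b \<in> Xpow (d - 1)" "a \<noteq> b"
  shows "level_flip d {a, b} \<in> Vser d 1"
proof -
  obtain g where g: "g \<in> carrier (Gd d)" "g a = b" using Gd_transitive_on_Xpow[OF ab(1,2), of d] by auto
  have "sym_diff (g ` {a}) {a} = {a, b}" using g(2) ab(3) by auto
  then show ?thesis
    using commutator_level_flip[OF d g(1), of "{a}"] ab(1)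
      commutator_in_comm_sub[where d = d and h = "level_flip d {a}", OF g(1) level_flip_in_level_stab[OF d]]
    by simp
qed

lemma Vser_1_eq:
  assumes d: "d \<ge> 1"
  shows "Vser d 1 = level_flips d (even_on {Xpow (d - 1)})"
proof
  have "even_on {Xpow (d - 1)} (sym_diff (g ` T) T)"
    if g: "g \<in> carrier (Gd d)" and T: "T \<subseteq> Xpow (d - 1)" for g T
  proof -
    have gT: "g ` T \<subseteq> Xpow (d - 1)" "card (g ` T) = card T" using Gd_image_Xpow[OF g _ T] by auto
    moreover have "finite T" using T finite_Xpow finite_subset by blast
    moreover have "Xpow (d - 1) \<inter> sym_diff (g ` T) T = sym_diff (g ` T) T" using gT(1) T by blast
    ultimately show ?thesis using even_card_sym_diff[of "g ` T" T] by (simp add: even_on_def)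
  qed
  moreover have "Vser d 1 = comm_sub d (carrier (Gd d)) (level_flips d (\<lambda>_. True))"
    using level_stab_eq_level_flips[OF d] by simp
  ultimately show "Vser d 1 \<subseteq> level_flips d (even_on {Xpow (d - 1)})"
    using comm_sub_level_flips_subset[OF d, of "\<lambda>_. True"] by simp
next
  have "subgroup (Vser d 1) (Gd d)"
    by (simp add: subgroup_comm_sub level_stab_def)
  then show "level_flips d (even_on {Xpow (d - 1)}) \<subseteq> Vser d 1"
    using level_flip_pair_in_Vser_1[OF d] by (intro level_flips_even_on_subset[OF d]) auto
qed

lemma even_card_Int_prefixed_iff:
  assumes "T \<subseteq> Xpow (Suc k)" "even (card T)"
  shows "even (card (prefixed x k \<inter> T)) \<longleftrightarrow> even (card (prefixed y k \<inter> T))"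
proof -
  have "T = (prefixed False k \<inter> T) \<union> (prefixed True k \<inter> T)"
    "disjnt (prefixed False k \<inter> T) (prefixed True k \<inter> T)"
    using assms(1) disjnt_prefixed[of False True k] by (auto simp: Xpow_Suc_eq_prefixed disjnt_def)
  moreover have "finite T" using assms(1) finite_Xpow finite_subset by blast
  ultimately have "card T = card (prefixed False k \<inter> T) + card (prefixed True k \<inter> T)"
    by (metis card_Un_disjnt finite_Int)
  then show ?thesis using assms(2) by (cases x; cases y) auto
qed

lemma prefixed_Int_image:
  assumes g: "g \<in> carrier (Gd d)" and "Suc k \<le> d" and T: "T \<subseteq> Xpow (Suc k)"
  obtains x where "prefixed y k \<inter> g ` T = g ` (prefixed x k \<inter> T)"
proof -
  obtain s where s: "\<And>x. s (\<not> x) = (\<not> s x)" "\<And>x. g ` prefixed x k \<subseteq> prefixed (s x) k"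
    using Gd_permutes_subtrees[OF g] assms(2) by (metis Suc_le_eq)
  have s_inj: "s a = s b \<Longrightarrow> a = b" for a b using s(1)[of False] by (cases a; cases b) auto
  obtain x where x: "s x = y" using s(1)[of False] by (cases "s False = y") auto
  have "prefixed y k \<inter> g ` T \<subseteq> g ` (prefixed x k \<inter> T)"
  proof
    fix z assume z: "z \<in> prefixed y k \<inter> g ` T"
    then obtain t x' where t: "t \<in> T" "z = g t" "t \<in> prefixed x' k"
      using T by (auto simp: Xpow_Suc_eq_prefixed)
    then have "g t \<in> prefixed y k" "g t \<in> prefixed (s x') k" using z s(2) by blast+
    then have "s x' = y" using disjnt_prefixed[of "s x'" y k] unfolding disjnt_def by blast
    then show "z \<in> g ` (prefixed x k \<inter> T)" using t x s_inj by blast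
  qed
  moreover have "g ` (prefixed x k \<inter> T) \<subseteq> prefixed y k \<inter> g ` T" using s(2)[of x] x by blast
  ultimately show thesis using that by blast
qed

lemma even_on_halves_commutator:
  assumes g: "g \<in> carrier (Gd d)" and "Suc k \<le> d" and T: "T \<subseteq> Xpow (Suc k)" "even (card T)"
  shows "even_on {prefixed False k, prefixed True k} (sym_diff (g ` T) T)"
proof -
  have "even (card (prefixed y k \<inter> g ` T)) \<longleftrightarrow> even (card (prefixed y k \<inter> T))" for y
  proof -
    obtain x where x: "prefixed y k \<inter> g ` T = g ` (prefixed x k \<inter> T)"
      using prefixed_Int_image[OF assms(1-3)] .
    moreover have "card (g ` (prefixed x k \<inter> T)) = card (prefixed x k \<inter> T)"
      using Gd_image_Xpow(2)[OF g assms(2)] T(1) by blast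
    ultimately show ?thesis using even_card_Int_prefixed_iff[OF T] by simp
  qed
  moreover have "A \<inter> sym_diff (g ` T) T = sym_diff (A \<inter> g ` T) (A \<inter> T)" for A by blast
  moreover have "finite T" using T(1) finite_Xpow finite_subset by blast
  ultimately show ?thesis
    using even_card_sym_diff[of "_ \<inter> g ` T" "_ \<inter> T"] by (auto simp: even_on_def)
qed

lemma level_flip_pair_in_Vser_2:
  assumes d: "d = Suc (Suc k)" and ab: "a \<in> prefixed y k" "b \<in> prefixed y k" "a \<noteq> b"
  shows "level_flip d {a, b} \<in> Vser d 2"
proof -
  have d1: "d \<ge> 1" using d by simp
  define u where "u = (\<not> y) # replicate k False"
  have u: "u \<in> prefixed (\<not> y) k" by (simp add: u_def prefixed_def Xpow_def)
  obtain g where g: "g \<in> carrier (Gd d)" "g a = b" "g u = u"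
    using Gd_transitive_on_prefixed_fixing[OF ab(1,2) u, of d] d by auto
  have "u \<noteq> a" "u \<noteq> b" using ab u disjnt_prefixed[of "\<not> y" y k] by (auto simp: disjnt_def)
  then have card: "card {a, u} = 2" and comm: "sym_diff (g ` {a, u}) {a, u} = {a, b}"
    using ab(3) g(2,3) by auto
  have au: "{a, u} \<subseteq> Xpow (d - 1)" using ab(1) u by (cases y) (auto simp: d Xpow_Suc_eq_prefixed)
  then have "level_flip d {a, u} \<in> Vser d 1"
    unfolding Vser_1_eq[OF d1] level_flips_def even_on_def using card by (auto simp: Int_absorb1)
  then show ?thesis
    using commutator_level_flip[OF d1 g(1) au] comm
      commutator_in_comm_sub[where d = d and h = "level_flip d {a, u}", OF g(1)]
    by (simp add: numeral_2_eq_2)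
qed

lemma Vser_2_eq:
  assumes d: "d = Suc (Suc k)"
  shows "Vser d 2 = level_flips d (even_on {prefixed False k, prefixed True k})"
proof
  have V2: "Vser d 2 = comm_sub d (carrier (Gd d)) (level_flips d (even_on {Xpow (Suc k)}))"
    using Vser_1_eq[of d] d by (simp add: numeral_2_eq_2)
  have "even (card T)" if "T \<subseteq> Xpow (Suc k)" "even_on {Xpow (Suc k)} T" for T
    using that by (simp add: even_on_def Int_absorb1)
  then show "Vser d 2 \<subseteq> level_flips d (even_on {prefixed False k, prefixed True k})"
    unfolding V2 using d by (intro comm_sub_level_flips_subset) (auto intro: even_on_halves_commutator)
next
  have d1: "d \<ge> 1" using d by simp
  have "subgroup (Vser d 2) (Gd d)"
    unfolding numeral_2_eq_2 Vser.simps(2) One_nat_def[symmetric] Vser_1_eq[OF d1]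
    using level_flip_in_carrier[OF d1] by (intro subgroup_comm_sub) (auto simp: level_flips_def)
  moreover have "\<Union>{prefixed False k, prefixed True k} = Xpow (d - 1)"
    "pairwise disjnt {prefixed False k, prefixed True k}"
    by (auto simp: d Xpow_Suc_eq_prefixed pairwise_insert disjnt_prefixed disjnt_sym)
  ultimately show "level_flips d (even_on {prefixed False k, prefixed True k}) \<subseteq> Vser d 2"
    using level_flip_pair_in_Vser_2[OF d] by (intro level_flips_even_on_subset[OF d1]) auto
qed

theorem mainTheorem14:
  fixes d :: nat
  assumes "d \<ge> 2"
  shows "Vser d 1 = {v \<in> level_stab d (d - 1). alpha_S (Xpow (d - 1)) v = 0}
       \<and> Vser d 2 = {v \<in> level_stab d (d - 1).
            alpha_S (prefixed False (d - 2)) v = 0 \<and> alpha_S (prefixed True (d - 2)) v = 0}"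
proof -
  obtain k where d: "d = Suc (Suc k)" using assms by (metis add_2_eq_Suc le_Suc_ex)
  then have "Vser d 1 = {v \<in> level_stab d (d - 1). \<forall>A\<in>{Xpow (d - 1)}. alpha_S A v = 0}"
    using Vser_1_eq[of d] level_stab_alpha_S_eq_level_flips[of d "{Xpow (d - 1)}"] by simp
  moreover have "Vser d 2 = {v \<in> level_stab d (d - 1). \<forall>A\<in>{prefixed False k, prefixed True k}. alpha_S A v = 0}"
    using Vser_2_eq[OF d] level_stab_alpha_S_eq_level_flips[of d "{prefixed False k, prefixed True k}"] d
    by (simp add: Xpow_Suc_eq_prefixed)
  ultimately show ?thesis using d by simp
qed

end
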